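(* Let $n$ and $k$ be positive integers such that $n \geq 3(n-k)$ and $n \geq k$. Then $$\left|\mathcal{K}_{k+1}(n+1)\right| = (n-k+1)\,\left|\mathcal{K}_{k}(n)\right|,$$ where $\mathcal{K}_k(n)$ denotes the set of linear chord diagrams of size $n$ in which every chord has length at least $k$.
   Context: A linear chord diagram of size $n$ is a partition of the set $\{1,2,\dots,2n\}$ into blocks of size two, called chords. For a chord $c=\{s_c,e_c\}$ with $s_c<e_c$, $s_c$ is its start point, $e_c$ its end point, and its length is $e_c-s_c$. For positive integers $k,n$, $\mathcal{K}_k(n)$ is the set of all linear chord diagrams of size $n$ such that every chord has length at least $k$. *)

theory Defs
  imports Main
begin

definition linear_chord_diagram :: "nat \<Rightarrow> nat set set \<Rightarrow> bool" where
  "linear_chord_diagram n D \<longleftrightarrow>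
     (\<forall>c\<in>D. card c = 2) \<and> \<Union>D = {1..2*n} \<and>
     (\<forall>c\<in>D. \<forall>c'\<in>D. c \<noteq> c' \<longrightarrow> c \<inter> c' = {})"

definition chord_length :: "nat set \<Rightarrow> nat" where
  "chord_length c = Max c - Min c"

definition K :: "nat \<Rightarrow> nat \<Rightarrow> nat set set set" where
  "K k n = {D. linear_chord_diagram n D \<and> (\<forall>c\<in>D. chord_length c \<ge> k)}"

end

theory Submission
  imports Defs
begin

text \<open>Put \<open>m = n - k\<close>, \<open>l = 2m + 1\<close> and \<open>r = n + m + 2\<close>. As \<open>3m \<le> n\<close>, in a diagram of
  \<open>K (k + 1) (n + 1)\<close> the point \<open>r\<close> is joined to some \<open>s \<le> l\<close> and \<open>l\<close> to some \<open>t \<ge> r\<close>.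
  Removing \<open>l\<close> and \<open>r\<close> (dropping the chord \<open>{l, r}\<close>, or else replacing \<open>{s, r}\<close> and \<open>{l, t}\<close>
  by \<open>{s, t}\<close>) and closing the two gaps yields a diagram of \<open>K k n\<close> in which \<open>s\<close> is either \<open>l\<close>
  or a point of \<open>{1..2m}\<close> joined to a point beyond \<open>n + m\<close>. Conversely, each such \<open>s\<close> can be
  used to reinsert \<open>l\<close> and \<open>r\<close>, and every diagram of \<open>K k n\<close> has exactly \<open>m\<close> points of the
  second kind, so the map is \<open>(m + 1)\<close>-to-one.\<close>

definition perfect_matching :: "'a set \<Rightarrow> 'a set set \<Rightarrow> bool" where
  "perfect_matching X D \<longleftrightarrow>
     (\<forall>c\<in>D. card c = 2) \<and> \<Union>D = X \<and> (\<forall>c\<in>D. \<forall>c'\<in>D. c \<noteq> c' \<longrightarrow> c \<inter> c' = {})"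

lemma linear_chord_diagram_iff: "linear_chord_diagram n D \<longleftrightarrow> perfect_matching {1..2*n} D"
  by (simp add: linear_chord_diagram_def perfect_matching_def)

lemma card_2_obtain_less:
  fixes c :: "'a::linorder set"
  assumes "card c = 2"
  obtains a b where "a < b" "c = {a, b}"
proof -
  obtain x y where "c = {x, y}" "x \<noteq> y" using assms card_2_iff by metis
  then show ?thesis
    using that[of x y] that[of y x] by (cases "x < y") (auto simp: insert_commute)
qed

lemma doubleton_eq_less_iff: "a < b \<Longrightarrow> x < y \<Longrightarrow> {a, b} = {x, y} \<longleftrightarrow> a = x \<and> b = y"
  for a b x y :: "'a::linorder"
  by (auto simp: doubleton_eq_iff)

lemma perfect_matching_chord_subset: "perfect_matching X D \<Longrightarrow> c \<in> D \<Longrightarrow> c \<subseteq> X"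
  unfolding perfect_matching_def by blast

lemma perfect_matching_chord_neq: "perfect_matching X D \<Longrightarrow> {x, y} \<in> D \<Longrightarrow> x \<noteq> y"
  unfolding perfect_matching_def by (cases "x = y") auto

lemma perfect_matching_disjoint:
  "perfect_matching X D \<Longrightarrow> c \<in> D \<Longrightarrow> c' \<in> D \<Longrightarrow> c \<noteq> c' \<Longrightarrow> c \<inter> c' = {}"
  unfolding perfect_matching_def by blast

lemma perfect_matching_image:
  assumes "perfect_matching X D" "inj_on h X"
  shows "perfect_matching (h ` X) ((`) h ` D)"
proof -
  note sub = perfect_matching_chord_subset[OF assms(1)]
  have "card (h ` c) = 2" if "c \<in> D" for c
    using card_image[OF inj_on_subset[OF assms(2) sub[OF that]]] assms(1) that
    unfolding perfect_matching_def by auto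
  moreover have "h ` c \<inter> h ` c' = {}" if "c \<in> D" "c' \<in> D" "h ` c \<noteq> h ` c'" for c c'
  proof -
    have "c \<inter> c' = {}" using perfect_matching_disjoint[OF assms(1)] that by blast
    then show ?thesis using inj_on_image_Int[OF assms(2) sub[OF that(1)] sub[OF that(2)]] by simp
  qed
  moreover have "\<Union>((`) h ` D) = h ` X" using assms(1) unfolding perfect_matching_def by auto
  ultimately show ?thesis unfolding perfect_matching_def by blast
qed

lemma perfect_matching_image_image:
  assumes "perfect_matching X D" "\<And>x. x \<in> X \<Longrightarrow> g (f x) = x"
  shows "(`) g ` (`) f ` D = D"
proof -
  have "g ` f ` c = c" if "c \<in> D" for c
    using perfect_matching_chord_subset[OF assms(1) that] assms(2)
    by (simp add: image_image subset_iff cong: image_cong)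
  then show ?thesis by (simp add: image_image cong: image_cong)
qed

lemma perfect_matching_remove:
  "perfect_matching X D \<Longrightarrow> c \<in> D \<Longrightarrow> perfect_matching (X - c) (D - {c})"
  unfolding perfect_matching_def by blast

lemma perfect_matching_insert:
  assumes "perfect_matching X D" "card c = 2" "c \<inter> X = {}"
  shows "perfect_matching (X \<union> c) (insert c D)"
proof -
  have "c \<noteq> {}" using assms(2) by auto
  then have "c \<notin> D" using assms unfolding perfect_matching_def by blast
  then show ?thesis using assms unfolding perfect_matching_def by blast
qed

lemma perfect_matching_split:
  assumes "perfect_matching X D" "{s, t} \<in> D" "a \<notin> X" "b \<notin> X" "a \<noteq> b"
  shows "perfect_matching (X \<union> {a, b}) (insert {s, b} (insert {a, t} (D - {{s, t}})))"
proof -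
  have st: "s \<in> X" "t \<in> X" "s \<noteq> t"
    using perfect_matching_chord_subset[OF assms(1,2)] perfect_matching_chord_neq[OF assms(1,2)]
    by auto
  have "perfect_matching (X - {s, t}) (D - {{s, t}})"
    using perfect_matching_remove[OF assms(1,2)] .
  then have "perfect_matching (X - {s, t} \<union> {a, t}) (insert {a, t} (D - {{s, t}}))"
    by (rule perfect_matching_insert) (use assms st in \<open>auto simp: card_insert_if\<close>)
  then have "perfect_matching (X - {s, t} \<union> {a, t} \<union> {s, b})
      (insert {s, b} (insert {a, t} (D - {{s, t}})))"
    by (rule perfect_matching_insert) (use assms st in \<open>auto simp: card_insert_if\<close>)
  moreover have "X - {s, t} \<union> {a, t} \<union> {s, b} = X \<union> {a, b}" using st by auto
  ultimately show ?thesis by simp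
qed

lemma perfect_matching_merge:
  assumes "perfect_matching X D" "{s, b} \<in> D" "{a, t} \<in> D" "{s, b} \<noteq> {a, t}"
  shows "perfect_matching (X - {a, b}) (insert {s, t} (D - {{s, b}, {a, t}}))"
proof -
  have disj: "{s, b} \<inter> {a, t} = {}" using perfect_matching_disjoint[OF assms] .
  have "s \<noteq> b" "a \<noteq> t"
    using perfect_matching_chord_neq[OF assms(1)] assms(2,3) by auto
  have "card {s, t} = 2" using disj by auto
  have "perfect_matching (X - {s, b} - {a, t}) (D - {{s, b}} - {{a, t}})"
    using assms by (intro perfect_matching_remove) auto
  then have "perfect_matching (X - {s, b} - {a, t} \<union> {s, t})
      (insert {s, t} (D - {{s, b}} - {{a, t}}))"
    by (rule perfect_matching_insert) (use disj \<open>card {s, t} = 2\<close> in blast)+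
  moreover have "X - {s, b} - {a, t} \<union> {s, t} = X - {a, b}"
    using disj \<open>s \<noteq> b\<close> \<open>a \<noteq> t\<close> perfect_matching_chord_subset[OF assms(1)] assms(2,3) by blast
  moreover have "D - {{s, b}} - {{a, t}} = D - {{s, b}, {a, t}}" by blast
  ultimately show ?thesis by simp
qed

definition partner :: "'a set set \<Rightarrow> 'a \<Rightarrow> 'a" where
  "partner D x = (THE y. {x, y} \<in> D)"

lemma partner_eqI:
  assumes "perfect_matching X D" "{x, y} \<in> D"
  shows "partner D x = y"
  unfolding partner_def
proof (rule the_equality)
  fix z assume z: "{x, z} \<in> D"
  have "{x, z} = {x, y}"
    using perfect_matching_disjoint[OF assms(1) z assms(2)] by blast
  then show "z = y" using perfect_matching_chord_neq[OF assms(1) z] by (auto simp: doubleton_eq_iff)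
qed (fact assms(2))

lemma partner_chord:
  assumes "perfect_matching X D" "x \<in> X"
  shows "{x, partner D x} \<in> D"
proof -
  obtain c where c: "c \<in> D" "x \<in> c" using assms unfolding perfect_matching_def by blast
  have "card c = 2" using assms(1) c(1) unfolding perfect_matching_def by simp
  then obtain y where "c = {x, y}" using c(2) by (auto simp: card_2_iff)
  then show ?thesis using partner_eqI[OF assms(1)] c(1) by simp
qed

lemma chord_length_doubleton: "a < b \<Longrightarrow> chord_length {a, b} = b - a"
  by (simp add: chord_length_def max_def min_def)

definition long_chords :: "nat \<Rightarrow> nat set set \<Rightarrow> bool" where
  "long_chords k D \<longleftrightarrow> (\<forall>a b. {a, b} \<in> D \<longrightarrow> a < b \<longrightarrow> k \<le> b - a)"

lemma long_chords_mono: "D' \<subseteq> D \<Longrightarrow> long_chords k D \<Longrightarrow> long_chords k D'"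
  unfolding long_chords_def by blast

lemma long_chords_insert:
  assumes "long_chords k D" "a < b" "k \<le> b - a"
  shows "long_chords k (insert {a, b} D)"
  using assms unfolding long_chords_def by (metis doubleton_eq_less_iff insert_iff)

lemma long_chords_image:
  assumes "perfect_matching X D" "long_chords k D"
    and h: "\<And>x y. x \<in> X \<Longrightarrow> y \<in> X \<Longrightarrow> x < y \<Longrightarrow> k \<le> y - x \<Longrightarrow> h x < h y \<and> k' \<le> h y - h x"
  shows "long_chords k' ((`) h ` D)"
  unfolding long_chords_def
proof (intro allI impI)
  fix a b assume ab: "{a, b} \<in> (`) h ` D" "a < b"
  then obtain c where c: "c \<in> D" "{a, b} = h ` c" by blast
  have "card c = 2" using assms(1) c unfolding perfect_matching_def by auto
  then obtain x y where xy: "x < y" "c = {x, y}" using card_2_obtain_less by metis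
  have "x \<in> X" "y \<in> X" using perfect_matching_chord_subset[OF assms(1) c(1)] xy by auto
  moreover have "k \<le> y - x" using assms(2) c xy unfolding long_chords_def by auto
  ultimately have "h x < h y" "k' \<le> h y - h x" using h xy by auto
  moreover have "a = h x \<and> b = h y" using doubleton_eq_less_iff[OF ab(2) \<open>h x < h y\<close>] c xy by simp
  ultimately show "k' \<le> b - a" by simp
qed

lemma mem_K_iff: "D \<in> K k n \<longleftrightarrow> perfect_matching {1..2*n} D \<and> long_chords k D"
proof -
  have "(\<forall>c\<in>D. k \<le> chord_length c) \<longleftrightarrow> long_chords k D" if "\<forall>c\<in>D. card c = 2"
    using that chord_length_doubleton card_2_obtain_less unfolding long_chords_def by metis
  then show ?thesis
    unfolding K_def linear_chord_diagram_iff perfect_matching_def by auto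
qed

lemma finite_K: "finite (K k n)"
proof (rule finite_subset)
  show "K k n \<subseteq> Pow (Pow {1..2*n})"
    unfolding K_def linear_chord_diagram_iff perfect_matching_def by auto
qed auto

lemma partner_K:
  assumes "D \<in> K k n" "x \<in> {1..2*n}"
  shows "partner D x \<in> {1..2*n}" "partner D x \<noteq> x" "partner D (partner D x) = x"
    "x + k \<le> partner D x \<or> partner D x + k \<le> x"
proof -
  have pm: "perfect_matching {1..2*n} D" and long: "long_chords k D"
    using assms(1) mem_K_iff by auto
  have c: "{x, partner D x} \<in> D" using partner_chord[OF pm assms(2)] .
  then have c': "{partner D x, x} \<in> D" by (simp add: insert_commute)
  show "partner D x \<in> {1..2*n}" using perfect_matching_chord_subset[OF pm c] by simp
  show "partner D x \<noteq> x" using perfect_matching_chord_neq[OF pm c] by simp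
  show "partner D (partner D x) = x" using partner_eqI[OF pm c'] .
  show "x + k \<le> partner D x \<or> partner D x + k \<le> x"
    using long c c' \<open>partner D x \<noteq> x\<close> unfolding long_chords_def
    by (metis le_diff_conv2 less_imp_le_nat add.commute nat_neq_iff)
qed

lemma card_involution_cross:
  assumes "\<And>x. x \<in> A \<Longrightarrow> p (p x) = x" "\<And>x. x \<in> B \<Longrightarrow> p (p x) = x"
  shows "card {x \<in> A. p x \<in> B} = card {x \<in> B. p x \<in> A}"
  by (rule bij_betw_same_card[of p], rule bij_betw_byWitness[where f' = p]) (use assms in auto)

lemma card_split_by_image:
  assumes "finite A" "\<And>x. x \<in> A \<Longrightarrow> f x \<in> B \<union> C" "B \<inter> C = {}"
  shows "card A = card {x \<in> A. f x \<in> B} + card {x \<in> A. f x \<in> C}"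
proof -
  have "A = {x \<in> A. f x \<in> B} \<union> {x \<in> A. f x \<in> C}" using assms(2) by auto
  then show ?thesis using assms(1,3) by (metis (no_types, lifting) card_Un_disjoint disjoint_iff
        finite_Un mem_Collect_eq)
qed

text \<open>Split \<open>{1..2n}\<close> into \<open>L = {1..2m}\<close>, \<open>M = {2m+1..n+m}\<close>, \<open>R = {n+m+1..2n}\<close>. When
  \<open>2m \<le> n - m\<close>, no chord has both ends in one block, so with \<open>x\<^sub>B\<^sub>C\<close> chords between blocks
  \<open>B\<close> and \<open>C\<close> we get \<open>x\<^sub>L\<^sub>M + x\<^sub>L\<^sub>R = 2m\<close>, \<open>x\<^sub>L\<^sub>M + x\<^sub>M\<^sub>R = n - m = x\<^sub>L\<^sub>R + x\<^sub>M\<^sub>R\<close>, whence \<open>x\<^sub>L\<^sub>R = m\<close>.\<close>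

lemma card_left_matched_right:
  assumes D: "D \<in> K (n - m) n" and "3 * m \<le> n"
  shows "card {s \<in> {1..2*m}. n + m < partner D s} = m"
proof -
  define p where "p = partner D"
  define L where "L = {1..2*m}"
  define M where "M = {2*m+1..n+m}"
  define R where "R = {n+m+1..2*n}"
  have P: "p x \<in> {1..2*n}" "p (p x) = x" "x + (n - m) \<le> p x \<or> p x + (n - m) \<le> x"
    if "x \<in> {1..2*n}" for x
    using partner_K[OF D that] unfolding p_def by auto
  have inv: "p (p x) = x" if "x \<in> L \<or> x \<in> M \<or> x \<in> R" for x
    using P(2) that \<open>3 * m \<le> n\<close> unfolding L_def M_def R_def by auto
  have "p x \<in> M \<union> R" if "x \<in> L" for x
    using P[of x] that \<open>3 * m \<le> n\<close> unfolding L_def M_def R_def by auto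
  then have "card L = card {x \<in> L. p x \<in> M} + card {x \<in> L. p x \<in> R}"
    by (intro card_split_by_image) (auto simp: L_def M_def R_def)
  moreover have "p x \<in> L \<union> R" if "x \<in> M" for x
    using P[of x] that \<open>3 * m \<le> n\<close> unfolding L_def M_def R_def by auto
  then have "card M = card {x \<in> M. p x \<in> L} + card {x \<in> M. p x \<in> R}"
    by (intro card_split_by_image) (auto simp: L_def M_def R_def)
  moreover have "p x \<in> L \<union> M" if "x \<in> R" for x
    using P[of x] that \<open>3 * m \<le> n\<close> unfolding L_def M_def R_def by auto
  then have "card R = card {x \<in> R. p x \<in> L} + card {x \<in> R. p x \<in> M}"
    by (intro card_split_by_image) (auto simp: L_def M_def R_def)
  moreover have "card {x \<in> M. p x \<in> L} = card {x \<in> L. p x \<in> M}"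
    "card {x \<in> R. p x \<in> L} = card {x \<in> L. p x \<in> R}"
    "card {x \<in> R. p x \<in> M} = card {x \<in> M. p x \<in> R}"
    by (rule card_involution_cross; use inv in blast)+
  moreover have "card L = 2 * m" "card M = n - m" "card R = n - m"
    using \<open>3 * m \<le> n\<close> unfolding L_def M_def R_def by auto
  ultimately have "card {x \<in> L. p x \<in> R} = m" by linarith
  moreover have "{x \<in> L. p x \<in> R} = {s \<in> {1..2*m}. n + m < p s}"
    using P(1) \<open>3 * m \<le> n\<close> unfolding L_def R_def by fastforce
  ultimately show ?thesis unfolding p_def by simp
qed

locale chord_insertion =
  fixes n m :: nat
  assumes three_m_le_n: "3 * m \<le> n"
begin

text \<open>\<open>ins_l\<close> and \<open>ins_r\<close> are the points \<open>l\<close> and \<open>r\<close> above; \<open>lift\<close> renumbers \<open>{1..2n}\<close>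
  around them.\<close>

abbreviation "ins_l \<equiv> 2 * m + 1"
abbreviation "ins_r \<equiv> n + m + 2"

definition lifted_points :: "nat set" where
  "lifted_points = {1..2*(n+1)} - {ins_l, ins_r}"

definition lift :: "nat \<Rightarrow> nat" where
  "lift x = (if n + m < x then x + 2 else if ins_l \<le> x then x + 1 else x)"

definition squeeze :: "nat \<Rightarrow> nat" where
  "squeeze x = (if ins_r < x then x - 2 else if ins_l < x then x - 1 else x)"

lemma squeeze_lift: "x \<in> {1..2*n} \<Longrightarrow> squeeze (lift x) = x \<and> lift x \<in> lifted_points"
  using three_m_le_n unfolding lift_def squeeze_def lifted_points_def by auto

lemma lift_squeeze: "x \<in> lifted_points \<Longrightarrow> lift (squeeze x) = x \<and> squeeze x \<in> {1..2*n}"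
  using three_m_le_n unfolding lift_def squeeze_def lifted_points_def by auto

lemma bij_betw_lift: "bij_betw lift {1..2*n} lifted_points"
  by (rule bij_betw_byWitness[where f' = squeeze]) (use squeeze_lift lift_squeeze in blast)+

lemma bij_betw_squeeze: "bij_betw squeeze lifted_points {1..2*n}"
  by (rule bij_betw_byWitness[where f' = lift]) (use squeeze_lift lift_squeeze in blast)+

lemma lift_gap:
  "x \<in> {1..2*n} \<Longrightarrow> y \<in> {1..2*n} \<Longrightarrow> x < y \<Longrightarrow> n - m \<le> y - x \<Longrightarrow>
    lift x < lift y \<and> n - m + 1 \<le> lift y - lift x"
  using three_m_le_n unfolding lift_def by auto

lemma squeeze_gap:
  "x \<in> lifted_points \<Longrightarrow> y \<in> lifted_points \<Longrightarrow> x < y \<Longrightarrow> n - m + 1 \<le> y - x \<Longrightarrow>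
    squeeze x < squeeze y \<and> n - m \<le> squeeze y - squeeze x"
  using three_m_le_n unfolding squeeze_def lifted_points_def by auto

lemma lift_K:
  assumes "D \<in> K (n - m) n"
  shows "perfect_matching lifted_points ((`) lift ` D)" "long_chords (n - m + 1) ((`) lift ` D)"
proof -
  have pm: "perfect_matching {1..2*n} D" and long: "long_chords (n - m) D"
    using assms mem_K_iff by auto
  show "perfect_matching lifted_points ((`) lift ` D)"
    using perfect_matching_image[OF pm bij_betw_imp_inj_on[OF bij_betw_lift]]
      bij_betw_imp_surj_on[OF bij_betw_lift] by simp
  show "long_chords (n - m + 1) ((`) lift ` D)"
    by (rule long_chords_image[OF pm long lift_gap])
qed

lemma ends_K:
  assumes D: "D \<in> K (n - m + 1) (n + 1)"
  shows "{partner D ins_r, ins_r} \<in> D" "{ins_l, partner D ins_l} \<in> D"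
    "1 \<le> partner D ins_r" "partner D ins_r \<le> ins_l"
    "ins_r \<le> partner D ins_l"
    "{ins_l, ins_r} \<in> D \<longleftrightarrow> partner D ins_r = ins_l"
    "{ins_l, ins_r} \<in> D \<longleftrightarrow> partner D ins_l = ins_r"
proof -
  have pm: "perfect_matching {1..2*(n+1)} D" using D mem_K_iff by blast
  have l: "ins_l \<in> {1..2*(n+1)}" and r: "ins_r \<in> {1..2*(n+1)}" using three_m_le_n by auto
  note Pl = partner_K[OF D l] and Pr = partner_K[OF D r]
  show cr: "{partner D ins_r, ins_r} \<in> D"
    using partner_chord[OF pm r] by (simp add: insert_commute)
  show "{ins_l, partner D ins_l} \<in> D" using partner_chord[OF pm l] .
  show "1 \<le> partner D ins_r" using Pr(1) by simp
  show "partner D ins_r \<le> ins_l" "ins_r \<le> partner D ins_l"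
    using Pl(1,4) Pr(1,4) three_m_le_n by auto
  show lr: "{ins_l, ins_r} \<in> D \<longleftrightarrow> partner D ins_r = ins_l"
    using cr partner_eqI[OF pm, of ins_r ins_l] by (auto simp: insert_commute)
  show "{ins_l, ins_r} \<in> D \<longleftrightarrow> partner D ins_l = ins_r"
    unfolding lr using Pl(3) Pr(3) by metis
qed

definition merge_ends :: "nat set set \<Rightarrow> nat set set" where
  "merge_ends D =
    (if {ins_l, ins_r} \<in> D then D - {{ins_l, ins_r}}
     else insert {partner D ins_r, partner D ins_l}
       (D - {{partner D ins_r, ins_r}, {ins_l, partner D ins_l}}))"

definition contract :: "nat set set \<Rightarrow> nat set set" where
  "contract D = (`) squeeze ` merge_ends D"

lemma merge_ends_K:
  assumes D: "D \<in> K (n - m + 1) (n + 1)"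
  shows "perfect_matching lifted_points (merge_ends D) \<and> long_chords (n - m + 1) (merge_ends D)"
proof -
  have pm: "perfect_matching {1..2*(n+1)} D" and long: "long_chords (n - m + 1) D"
    using D mem_K_iff by auto
  note ends = ends_K[OF D]
  show ?thesis
  proof (cases "{ins_l, ins_r} \<in> D")
    case True
    then show ?thesis
      using perfect_matching_remove[OF pm True] long_chords_mono[OF _ long]
      unfolding merge_ends_def lifted_points_def by auto
  next
    case False
    define s t where "s = partner D ins_r" and "t = partner D ins_l"
    have st: "1 \<le> s" "s < ins_l" "ins_r < t"
      using ends False unfolding s_def t_def by auto
    have E: "merge_ends D = insert {s, t} (D - {{s, ins_r}, {ins_l, t}})"
      using False unfolding merge_ends_def s_def t_def by simp
    have "perfect_matching ({1..2*(n+1)} - {ins_l, ins_r}) (merge_ends D)"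
      unfolding E by (rule perfect_matching_merge[OF pm])
        (use ends st in \<open>auto simp: s_def t_def doubleton_eq_iff\<close>)
    moreover have "long_chords (n - m + 1) (merge_ends D)"
      unfolding E by (rule long_chords_insert[OF long_chords_mono[OF _ long]])
        (use st three_m_le_n in auto)
    ultimately show ?thesis unfolding lifted_points_def by blast
  qed
qed

lemma contract_K:
  assumes D: "D \<in> K (n - m + 1) (n + 1)"
  shows "contract D \<in> K (n - m) n"
proof -
  have pm: "perfect_matching lifted_points (merge_ends D)"
    and long: "long_chords (n - m + 1) (merge_ends D)"
    using merge_ends_K[OF D] by auto
  have "perfect_matching {1..2*n} (contract D)"
    using perfect_matching_image[OF pm bij_betw_imp_inj_on[OF bij_betw_squeeze]]
      bij_betw_imp_surj_on[OF bij_betw_squeeze] unfolding contract_def by simp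
  moreover have "long_chords (n - m) (contract D)"
    unfolding contract_def by (rule long_chords_image[OF pm long squeeze_gap])
  ultimately show ?thesis using mem_K_iff by blast
qed

definition anchors :: "nat set set \<Rightarrow> nat set" where
  "anchors D = insert ins_l {s \<in> {1..2*m}. n + m < partner D s}"

definition expand :: "nat set set \<Rightarrow> nat \<Rightarrow> nat set set" where
  "expand D s =
    (if s = ins_l then insert {ins_l, ins_r} ((`) lift ` D)
     else insert {s, ins_r} (insert {ins_l, lift (partner D s)}
       ((`) lift ` D - {{s, lift (partner D s)}})))"

lemma lifted_anchor_chord:
  assumes D: "D \<in> K (n - m) n" and s: "s \<in> anchors D" "s \<noteq> ins_l"
  shows "{s, partner D s + 2} \<in> (`) lift ` D" "lift (partner D s) = partner D s + 2"
    "1 \<le> s" "s \<le> 2 * m" "n + m < partner D s"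
proof -
  show bounds: "1 \<le> s" "s \<le> 2 * m" "n + m < partner D s"
    using s unfolding anchors_def by auto
  then show lift_partner: "lift (partner D s) = partner D s + 2" unfolding lift_def by simp
  have "lift s = s" using bounds three_m_le_n unfolding lift_def by simp
  have "s \<in> {1..2*n}" using bounds three_m_le_n by simp
  with D have "{s, partner D s} \<in> D" unfolding mem_K_iff by (blast intro: partner_chord)
  then have "lift ` {s, partner D s} \<in> (`) lift ` D" by (rule imageI)
  then show "{s, partner D s + 2} \<in> (`) lift ` D" using \<open>lift s = s\<close> lift_partner by simp
qed

lemma expand_K:
  assumes D: "D \<in> K (n - m) n" and s: "s \<in> anchors D"
  shows "expand D s \<in> K (n - m + 1) (n + 1)"
proof -
  note lifted = lift_K[OF D]
  have U: "lifted_points \<union> {ins_l, ins_r} = {1..2*(n+1)}"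
    unfolding lifted_points_def using three_m_le_n by auto
  have notin: "ins_l \<notin> lifted_points" "ins_r \<notin> lifted_points" unfolding lifted_points_def by auto
  show ?thesis
  proof (cases "s = ins_l")
    case True
    then have E: "expand D s = insert {ins_l, ins_r} ((`) lift ` D)" unfolding expand_def by simp
    have "perfect_matching (lifted_points \<union> {ins_l, ins_r}) (expand D s)"
      unfolding E by (rule perfect_matching_insert[OF lifted(1)]) (use notin three_m_le_n in auto)
    moreover have "long_chords (n - m + 1) (expand D s)"
      unfolding E by (rule long_chords_insert[OF lifted(2)]) (use three_m_le_n in auto)
    ultimately show ?thesis unfolding U mem_K_iff by blast
  next
    case False
    define p where "p = partner D s"
    note anchor = lifted_anchor_chord[OF D s False, folded p_def]
    have E: "expand D s = insert {s, ins_r} (insert {ins_l, p + 2} ((`) lift ` D - {{s, p + 2}}))"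
      using False anchor unfolding expand_def p_def by simp
    have "perfect_matching (lifted_points \<union> {ins_l, ins_r}) (expand D s)"
      unfolding E by (rule perfect_matching_split[OF lifted(1) anchor(1) notin])
        (use three_m_le_n in simp)
    moreover have "long_chords (n - m + 1) (expand D s)"
      unfolding E using anchor three_m_le_n
      by (intro long_chords_insert long_chords_mono[OF _ lifted(2)]) auto
    ultimately show ?thesis unfolding U mem_K_iff by blast
  qed
qed

lemma card_anchors: "D \<in> K (n - m) n \<Longrightarrow> card (anchors D) = m + 1"
  using card_left_matched_right[OF _ three_m_le_n] unfolding anchors_def by simp

lemma merge_ends_chord:
  assumes D: "D \<in> K (n - m + 1) (n + 1)" and "{ins_l, ins_r} \<notin> D"
  shows "{partner D ins_r, partner D ins_l} \<in> merge_ends D"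
    "partner D ins_r < ins_l" "ins_r < partner D ins_l"
  using assms ends_K[OF D] unfolding merge_ends_def by auto

lemma partner_contract:
  assumes D: "D \<in> K (n - m + 1) (n + 1)" and "{ins_l, ins_r} \<notin> D"
  shows "partner (contract D) (partner D ins_r) = partner D ins_l - 2"
proof -
  note chord = merge_ends_chord[OF assms]
  have "squeeze (partner D ins_r) = partner D ins_r" "squeeze (partner D ins_l) = partner D ins_l - 2"
    using chord(2,3) three_m_le_n unfolding squeeze_def by auto
  then have "squeeze ` {partner D ins_r, partner D ins_l} = {partner D ins_r, partner D ins_l - 2}"
    by simp
  then have "{partner D ins_r, partner D ins_l - 2} \<in> contract D"
    using chord(1) unfolding contract_def by (metis imageI)
  moreover have "perfect_matching {1..2*n} (contract D)" using contract_K[OF D] mem_K_iff by blast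
  ultimately show ?thesis by (blast intro: partner_eqI)
qed

lemma partner_in_anchors:
  assumes D: "D \<in> K (n - m + 1) (n + 1)"
  shows "partner D ins_r \<in> anchors (contract D)"
proof (cases "{ins_l, ins_r} \<in> D")
  case True
  then show ?thesis using ends_K(6)[OF D] unfolding anchors_def by simp
next
  case False
  note chord = merge_ends_chord[OF D False]
  have "partner D ins_r \<in> {1..2*m}" using ends_K(3)[OF D] chord(2) by simp
  moreover have "n + m < partner (contract D) (partner D ins_r)"
    using partner_contract[OF D False] chord(3) by simp
  ultimately show ?thesis unfolding anchors_def by simp
qed

lemma lift_contract:
  assumes D: "D \<in> K (n - m + 1) (n + 1)"
  shows "(`) lift ` contract D = merge_ends D"
  unfolding contract_def
  by (rule perfect_matching_image_image) (use merge_ends_K[OF D] lift_squeeze in auto)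

lemma expand_contract:
  assumes D: "D \<in> K (n - m + 1) (n + 1)"
  shows "expand (contract D) (partner D ins_r) = D"
proof (cases "{ins_l, ins_r} \<in> D")
  case True
  then have "partner D ins_r = ins_l" using ends_K(6)[OF D] by simp
  then show ?thesis
    using True lift_contract[OF D] unfolding expand_def merge_ends_def by (simp add: insert_absorb)
next
  case False
  define s t where "s = partner D ins_r" and "t = partner D ins_l"
  have pm: "perfect_matching {1..2*(n+1)} D" using D mem_K_iff by blast
  have chords: "{s, ins_r} \<in> D" "{ins_l, t} \<in> D"
    using ends_K(1,2)[OF D] unfolding s_def t_def by auto
  have "s \<noteq> ins_l" "ins_r < t"
    using merge_ends_chord(2,3)[OF D False] unfolding s_def t_def by auto
  then have "lift (t - 2) = t" unfolding lift_def by (simp, linarith)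
  have "{s, t} \<notin> D"
  proof
    assume "{s, t} \<in> D"
    then have "t = partner D s" using partner_eqI[OF pm] by simp
    also have "\<dots> = ins_r" using partner_eqI[OF pm chords(1)] .
    finally show False using \<open>ins_r < t\<close> by simp
  qed
  have "expand (contract D) s = insert {s, ins_r} (insert {ins_l, t} (merge_ends D - {{s, t}}))"
    using \<open>s \<noteq> ins_l\<close> \<open>lift (t - 2) = t\<close> partner_contract[OF D False] lift_contract[OF D]
    unfolding expand_def s_def t_def by simp
  also have "\<dots> = D"
    using False chords \<open>{s, t} \<notin> D\<close> unfolding merge_ends_def s_def t_def by auto
  finally show ?thesis unfolding s_def .
qed

lemma contract_expand:
  assumes D: "D \<in> K (n - m) n" and s: "s \<in> anchors D"
  shows "partner (expand D s) ins_r = s" "contract (expand D s) = D"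
proof -
  have E: "expand D s \<in> K (n - m + 1) (n + 1)" using expand_K[OF D s] .
  have pm: "perfect_matching {1..2*(n+1)} (expand D s)" using E mem_K_iff by blast
  have "{ins_r, s} \<in> expand D s" unfolding expand_def by auto
  then show partner_r: "partner (expand D s) ins_r = s" by (rule partner_eqI[OF pm])
  have outside: "{x, y} \<notin> (`) lift ` D" if "x = ins_l \<or> x = ins_r" for x y
    using perfect_matching_chord_subset[OF lift_K(1)[OF D]] that unfolding lifted_points_def by blast
  have "merge_ends (expand D s) = (`) lift ` D"
  proof (cases "s = ins_l")
    case True
    then have "expand D s = insert {ins_l, ins_r} ((`) lift ` D)" unfolding expand_def by simp
    then show ?thesis using outside unfolding merge_ends_def by simp
  next
    case False
    define p where "p = partner D s"
    note anchor = lifted_anchor_chord[OF D s False, folded p_def]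
    have Ex: "expand D s = insert {s, ins_r} (insert {ins_l, p + 2} ((`) lift ` D - {{s, p + 2}}))"
      using False anchor unfolding expand_def p_def by simp
    have "partner (expand D s) ins_l = p + 2" using partner_eqI[OF pm] Ex by blast
    moreover have "{ins_l, ins_r} \<notin> expand D s" using ends_K(6)[OF E] partner_r False by simp
    ultimately have "merge_ends (expand D s) =
        insert {s, p + 2} (expand D s - {{s, ins_r}, {ins_l, p + 2}})"
      using partner_r unfolding merge_ends_def by simp
    also have "expand D s - {{s, ins_r}, {ins_l, p + 2}} = (`) lift ` D - {{s, p + 2}}"
      unfolding Ex using outside[of ins_r s] outside[of ins_l "p + 2"] by (auto simp: insert_commute)
    finally show ?thesis using anchor(1) by (simp add: insert_absorb)
  qed
  moreover have "(`) squeeze ` (`) lift ` D = D"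
    by (rule perfect_matching_image_image) (use D mem_K_iff squeeze_lift in auto)
  ultimately show "contract (expand D s) = D" unfolding contract_def by simp
qed

lemma card_K_Suc: "card (K (n - m + 1) (n + 1)) = (m + 1) * card (K (n - m) n)"
proof -
  have "bij_betw (\<lambda>D. (contract D, partner D ins_r)) (K (n - m + 1) (n + 1))
      (SIGMA D:K (n - m) n. anchors D)"
    by (rule bij_betw_byWitness[where f' = "\<lambda>(D, s). expand D s"])
      (auto simp only: split_paired_Ball_Sigma case_prod_conv prod.inject image_subset_iff
        mem_Sigma_iff expand_contract contract_expand contract_K partner_in_anchors expand_K)
  then have "card (K (n - m + 1) (n + 1)) = card (SIGMA D:K (n - m) n. anchors D)"
    by (rule bij_betw_same_card)
  also have "\<dots> = (\<Sum>D\<in>K (n - m) n. card (anchors D))"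
    by (rule card_SigmaI) (auto simp: finite_K anchors_def)
  also have "\<dots> = (m + 1) * card (K (n - m) n)" by (simp add: card_anchors)
  finally show ?thesis .
qed

end

theorem theorem1:
  fixes n k :: nat
  assumes "0 < n" and "0 < k" and "int n \<ge> 3 * (int n - int k)" and "n \<ge> k"
  shows "card (K (k+1) (n+1)) = (n - k + 1) * card (K k n)"
proof -
  interpret chord_insertion n "n - k"
    by unfold_locales (use assms(3,4) in auto)
  have "n - (n - k) = k" using assms(4) by simp
  then show ?thesis using card_K_Suc by simp
qed

end
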